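(* Let $H$ be a digraph and $u,v\in V(H)$ with $d(u,v)=n$ in $H$, where $n\ge 4$. Let $Q=x_0x_1\ldots x_n$ be a shortest $(u,v)$-path in $H$. If $H[V(Q)]$ is a semicomplete digraph, then for any $x_i,x_j\in V(Q)$ with $0\le i<j\le n$ and any $p\in\{2,3,\ldots,n-1\}$, there exists a path of length $p$ from $x_j$ to $x_i$ in $H[V(Q)]$.
   Context: Digraphs are finite, without loops or multiple arcs. $d(u,v)$ is the length of a shortest $(u,v)$-path. $H[S]$ denotes the subdigraph induced by $S$. A semicomplete digraph is one in which every two distinct vertices $x,y$ are adjacent, i.e. $xy$ or $yx$ is an arc. *)

theory Defs
  imports Main
begin

text \<open>A digraph is given by a vertex set V and an arc set A (finite, no loops;
  multiple arcs are excluded automatically since A is a set of pairs).\<close>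

definition digraph :: "'a set \<Rightarrow> ('a \<times> 'a) set \<Rightarrow> bool" where
  "digraph V A \<longleftrightarrow> finite V \<and> A \<subseteq> V \<times> V \<and> (\<forall>x. (x, x) \<notin> A)"

definition is_path :: "'a set \<Rightarrow> ('a \<times> 'a) set \<Rightarrow> 'a list \<Rightarrow> bool" where
  "is_path V A P \<longleftrightarrow> P \<noteq> [] \<and> distinct P \<and> set P \<subseteq> V \<and>
     (\<forall>i. Suc i < length P \<longrightarrow> (P ! i, P ! Suc i) \<in> A)"

definition path_len :: "'a list \<Rightarrow> nat" where
  "path_len P = length P - 1"

definition is_path_from_to :: "'a set \<Rightarrow> ('a \<times> 'a) set \<Rightarrow> 'a \<Rightarrow> 'a \<Rightarrow> 'a list \<Rightarrow> bool" where
  "is_path_from_to V A u v P \<longleftrightarrow> is_path V A P \<and> hd P = u \<and> last P = v"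

definition dist :: "'a set \<Rightarrow> ('a \<times> 'a) set \<Rightarrow> 'a \<Rightarrow> 'a \<Rightarrow> nat" where
  "dist V A u v = (LEAST k. \<exists>P. is_path_from_to V A u v P \<and> path_len P = k)"

definition induced_arcs :: "('a \<times> 'a) set \<Rightarrow> 'a set \<Rightarrow> ('a \<times> 'a) set" where
  "induced_arcs A S = A \<inter> (S \<times> S)"

definition semicomplete :: "'a set \<Rightarrow> ('a \<times> 'a) set \<Rightarrow> bool" where
  "semicomplete V A \<longleftrightarrow> digraph V A \<and>
     (\<forall>x\<in>V. \<forall>y\<in>V. x \<noteq> y \<longrightarrow> (x, y) \<in> A \<or> (y, x) \<in> A)"

end

theory Submission
  imports Defs
begin

text \<open>Since Q is a shortest path, an arc from x_a to x_b with
  b \<ge> a + 2 would shorten it, so semicompleteness of H[V(Q)] forces every backward chord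
  from x_b to x_a. Forward steps along Q combined with such chords give paths of every length p
  from x_j to x_i: for short p, walk forward from x_j, jump back below x_i and walk up to x_i;
  for long p, walk to x_n, jump to a segment x_c ... x_d below x_j of suitable length, then jump
  to x_0 and walk up to x_i.\<close>

lemma successively_upt:
  assumes "\<And>k. a \<le> k \<Longrightarrow> Suc k < b \<Longrightarrow> R k (Suc k)"
  shows "successively R [a..<b]"
  unfolding successively_conv_nth using assms by auto

lemma dist_le_path_len:
  assumes "is_path_from_to V A u v P"
  shows "dist V A u v \<le> path_len P"
  unfolding dist_def using assms by (intro Least_le) blast

lemma is_path_from_to_map_nth:
  assumes "distinct Q" "set Q \<subseteq> W" "L \<noteq> []" "distinct L" "\<forall>k\<in>set L. k < length Q"
    and "successively (\<lambda>k l. (Q ! k, Q ! l) \<in> B) L"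
  shows "is_path_from_to W B (Q ! hd L) (Q ! last L) (map ((!) Q) L)"
  using assms
  by (auto simp: is_path_from_to_def is_path_def distinct_map inj_on_def nth_eq_iff_index_eq
      hd_map last_map dest: successively_nth)

lemma shortest_path_no_forward_chord:
  assumes Q: "is_path_from_to V A u v Q" and shortest: "path_len Q = dist V A u v"
    and ab: "a + 2 \<le> b" "b < length Q"
  shows "(Q ! a, Q ! b) \<notin> A"
proof
  assume chord: "(Q ! a, Q ! b) \<in> A"
  have path: "is_path V A Q" and ends: "Q ! 0 = u" "Q ! (length Q - 1) = v"
    using Q by (auto simp: is_path_from_to_def is_path_def hd_conv_nth last_conv_nth)
  define L where "L = [0..<Suc a] @ [b..<length Q]"
  have "is_path_from_to V A (Q ! hd L) (Q ! last L) (map ((!) Q) L)"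
  proof (rule is_path_from_to_map_nth)
    show "successively (\<lambda>k l. (Q ! k, Q ! l) \<in> A) L"
      unfolding L_def successively_append_iff using path ab chord
      by (auto simp del: upt_Suc simp: is_path_def intro!: successively_upt)
  qed (use path ab in \<open>auto simp: L_def is_path_def\<close>)
  moreover have "hd L = 0" "last L = length Q - 1"
    using ab by (auto simp: L_def hd_append last_append simp del: upt_Suc)
  ultimately have "dist V A u v \<le> path_len (map ((!) Q) L)"
    using ends by (metis dist_le_path_len)
  also have "\<dots> < path_len Q"
    using ab by (simp add: L_def path_len_def)
  finally show False using shortest by simp
qed

lemma semicomplete_shortest_path_back_chord:
  assumes Q: "is_path_from_to V A u v Q" and shortest: "path_len Q = dist V A u v"
    and sc: "semicomplete (set Q) (induced_arcs A (set Q))"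
    and ab: "a + 2 \<le> b" "b < length Q"
  shows "(Q ! b, Q ! a) \<in> induced_arcs A (set Q)"
proof -
  have "distinct Q" using Q by (simp add: is_path_from_to_def is_path_def)
  then have "Q ! a \<noteq> Q ! b" using ab by (simp add: nth_eq_iff_index_eq)
  moreover have "Q ! a \<in> set Q" "Q ! b \<in> set Q" using ab by auto
  moreover have "(Q ! a, Q ! b) \<notin> induced_arcs A (set Q)"
    using shortest_path_no_forward_chord[OF Q shortest ab] by (simp add: induced_arcs_def)
  ultimately show ?thesis using sc unfolding semicomplete_def by blast
qed

lemma back_chord_path_short:
  assumes step: "\<And>k. k < n \<Longrightarrow> R k (Suc k)"
    and chord: "\<And>a b. a + 2 \<le> b \<Longrightarrow> b \<le> n \<Longrightarrow> R b a"
    and ij: "i < j" "j \<le> n" and p: "2 \<le> p" "p \<le> n - j + i + 1"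
  obtains L where "L \<noteq> []" "distinct L" "\<forall>k\<in>set L. k \<le> n" "successively R L"
    "hd L = j" "last L = i" "length L = Suc p"
proof
  define s where "s = min (p - 1) (n - j)"
  define t where "t = p - 1 - s"
  have st: "s \<le> n - j" "t \<le> i" "s + t = p - 1" using ij p by (auto simp: s_def t_def)
  define L where "L = [j..<Suc (j + s)] @ [i - t..<Suc i]"
  show "L \<noteq> []" "hd L = j" "last L = i" by (simp_all add: L_def hd_append del: upt_Suc)
  show "distinct L" "\<forall>k\<in>set L. k \<le> n" "length L = Suc p" using ij p st by (auto simp: L_def)
  show "successively R L"
    unfolding L_def successively_append_iff using ij p st
    by (auto simp del: upt_Suc intro!: successively_upt step chord)
qed

lemma back_chord_path_long:
  assumes step: "\<And>k. k < n \<Longrightarrow> R k (Suc k)"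
    and chord: "\<And>a b. a + 2 \<le> b \<Longrightarrow> b \<le> n \<Longrightarrow> R b a"
    and n: "4 \<le> n" and ij: "i < j" "j \<le> n" and p: "n - j + i + 2 \<le> p" "p \<le> n - 1"
  obtains L where "L \<noteq> []" "distinct L" "\<forall>k\<in>set L. k \<le> n" "successively R L"
    "hd L = j" "last L = i" "length L = Suc p"
proof
  \<comment> \<open>d exceeds j - 2 only if j = 3 and i = 0; the chord from n to d = 2 then needs 4 \<le> n.\<close>
  define d where "d = max 2 (j - 2)"
  define c where "c = d - (p - (n - j + i + 2))"
  have cd: "i + 1 \<le> c" "c \<le> d" "d < j" "c + 2 \<le> n" "2 \<le> d" "p = n - j + i + 2 + (d - c)"
    using n ij p by (auto simp: c_def d_def)
  define L where "L = [j..<Suc n] @ [c..<Suc d] @ [0..<Suc i]"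
  show "L \<noteq> []" "hd L = j" "last L = i" using ij by (simp_all add: L_def hd_append del: upt_Suc)
  show "distinct L" "\<forall>k\<in>set L. k \<le> n" "length L = Suc p" using ij cd by (auto simp: L_def)
  show "successively R L"
    unfolding L_def successively_append_iff using ij cd
    by (auto simp del: upt_Suc intro!: successively_upt step chord)
qed

lemma back_chord_path:
  assumes step: "\<And>k. k < n \<Longrightarrow> R k (Suc k)"
    and chord: "\<And>a b. a + 2 \<le> b \<Longrightarrow> b \<le> n \<Longrightarrow> R b a"
    and n: "4 \<le> n" and ij: "i < j" "j \<le> n" and p: "2 \<le> p" "p \<le> n - 1"
  obtains L where "L \<noteq> []" "distinct L" "\<forall>k\<in>set L. k \<le> n" "successively R L"
    "hd L = j" "last L = i" "length L = Suc p"
proof (cases "p \<le> n - j + i + 1")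
  case True
  from back_chord_path_short[of n R, OF step chord ij p(1) True] that show ?thesis by blast
next
  case False
  then have "n - j + i + 2 \<le> p" by simp
  from back_chord_path_long[of n R, OF step chord n ij this p(2)] that show ?thesis by blast
qed

theorem lemma2p6:
  fixes V :: "'a set" and A :: "('a \<times> 'a) set" and u v :: 'a and n :: nat and Q :: "'a list"
  assumes "digraph V A"
    and "u \<in> V" and "v \<in> V"
    and "dist V A u v = n" and "n \<ge> 4"
    and "is_path_from_to V A u v Q" and "path_len Q = n"
    and "semicomplete (set Q) (induced_arcs A (set Q))"
  shows "\<forall>i j p. i < j \<and> j \<le> n \<and> 2 \<le> p \<and> p \<le> n - 1 \<longrightarrow>
           (\<exists>P. is_path_from_to (set Q) (induced_arcs A (set Q)) (Q ! j) (Q ! i) P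
                \<and> path_len P = p)"
proof (intro allI impI)
  fix i j p assume ijp: "i < j \<and> j \<le> n \<and> 2 \<le> p \<and> p \<le> n - 1"
  let ?B = "induced_arcs A (set Q)"
  have path: "is_path V A Q" and len: "length Q = Suc n"
    using assms(5-7) by (auto simp: is_path_from_to_def is_path_def path_len_def)
  obtain L where L: "L \<noteq> []" "distinct L" "\<forall>k\<in>set L. k \<le> n"
    "successively (\<lambda>k l. (Q ! k, Q ! l) \<in> ?B) L" "hd L = j" "last L = i" "length L = Suc p"
  proof (rule back_chord_path[of n _ i j p])
    show "(Q ! k, Q ! Suc k) \<in> ?B" if "k < n" for k
      using path that len by (auto simp: is_path_def induced_arcs_def)
    show "(Q ! b, Q ! a) \<in> ?B" if "a + 2 \<le> b" "b \<le> n" for a b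
      using semicomplete_shortest_path_back_chord[OF assms(6)] assms(4,7,8) that len by simp
  qed (use ijp assms(5) in auto)
  have "is_path_from_to (set Q) ?B (Q ! hd L) (Q ! last L) (map ((!) Q) L)"
    using L len path by (intro is_path_from_to_map_nth) (auto simp: is_path_def)
  then show "\<exists>P. is_path_from_to (set Q) ?B (Q ! j) (Q ! i) P \<and> path_len P = p"
    using L by (auto simp: path_len_def)
qed

end
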